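(* Let $R$ be an execution of the algorithm described in the context that starts from a well-initialized system state and includes a complete invocation of binary consensus. Suppose there is a system state $c\in R$ in which $\mathsf{result}_i()=v\in\{0,1\}$ for a correct processor $p_i$. Then there is a correct processor $p_j$ and a step of $R$ between $R$'s starting state and $c$ in which $p_j$ invokes $\mathsf{propose}_j(v)$.
   Context: System model. There are $n$ processors $p_1,\dots,p_n$ with unique identifiers, at most $t$ of which are Byzantine, where $n\ge 3t+1$; $\mathit{Correct}$ denotes the set of indices of non-faulty processors. A Byzantine processor computes its state according to the algorithm, but an adversary may arbitrarily modify, delay or remove the messages it sends. Processors cannot impersonate others, and messages between correct processors are private and cannot be altered. The system is asynchronous message passing. Every pair of processors is joined by a bidirectional channel of bounded capacity that may lose, duplicate and reorder packets, but a message sent infinitely often is received infinitely often. The scheduling of message arrivals does not depend on coin values. A common coin provides $\mathrm{randomBit}(r)$ for $r\in\mathbb{Z}^+$: all correct processors obtain the same bit $b_r$, with $\Pr(b_r=0)=\Pr(b_r=1)=1/2$, and the $b_r$ are independent. $M\in\mathbb{Z}^+$ is a fixed constant. The algorithm (code of $p_i$; $x_i$ denotes $p_i$'s copy of variable $x$). Local state: an integer $r\in\{0,\dots,M\}$; an array $est[0..M{+}1][1..n]$ whose entries are subsets of $\{0,1\}$; and an array $aux[0..M{+}1][1..n]$ whose entries lie in $\{0,1,\bot\}$. $\mathit{initState}$ means $r=0$, every $est$ entry equal to $\emptyset$, and every $aux$ entry equal to $\bot$. Let $\mathit{binValues}(r,x)=\{y\in\{0,1\}: |\{j: y\in est[r][j]\}|\ge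 x\}$. $\mathsf{infoResult}()$ is defined as follows: if there is a set $S$ of processors with $|S|\ge n-t$ and $aux[r][j]\in \mathit{binValues}(r,2t{+}1)$ for all $p_j\in S$, it returns $\{aux[r][j]:p_j\in S\}$ for such an $S$; otherwise it returns $\emptyset$. - $\mathsf{propose}(v)$, $v\in\{0,1\}$: set $(r,est,aux)\gets\mathit{initState}$, then $est[0][i]\gets\{v\}$. - $\mathsf{result}()$: if $est[M{+}1][i]$ is a singleton $\{v\}$, return $v$; else if $r\ge M$ and $\mathsf{infoResult}()\ne\emptyset$, return the error symbol $\boxtimes$; else return $\bot$. - $\mathsf{decide}(x)$: for every $r'\in\{r,\dots,M{+}1\}$ with $est[r'][i]=\emptyset$ or $aux[r'][i]=\bot$, set $est[r'][i]\gets\{x\}$ and $aux[r'][i]\gets x$. - $\mathsf{tryToDecide}(values)$: if $values$ is not a singleton, set $est[r][i]\gets\{\mathrm{randomBit}(r)\}$. Otherwise $values=\{v\}$: set $est[r][i]\gets\{v\}$, and if $v=\mathrm{randomBit}(r)$, call $\mathsf{decide}(v)$. - Do-forever loop. Each iteration does the following, provided $(r,est,aux)\ne\mathit{initState}$: (1) if $est[0][i]$ contains two values, replace it by $\{w\}$ for some $w\in est[0][i]$; (2) for every $r'\in\{1,\dots,r-1\}$ with $est[r'][i]=\emptyset$ or $aux[r'][i]=\bot$, set $est[r'][i]\gets est[0][i]$ and $aux[r'][i]\gets x$ for some $x\in est[0][i]$; (3) set $r\gets\min\{r+1,M\}$; (4) repeat { if some $w\in\mathit{binValues}(r,2t{+}1)$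 exists and ($aux[r][i]=\bot$ or $aux[r][i]\notin\mathit{binValues}(r,2t{+}1)$), set $aux[r][i]\gets w$; send $\mathrm{EST}(\mathsf{True},r,est[r{-}1][i]\cup\mathit{binValues}(r,t{+}1),aux[r][i])$ to every processor } until $\mathsf{infoResult}()\ne\emptyset$; (5) call $\mathsf{tryToDecide}(\mathsf{infoResult}())$. - Upon arrival of $\mathrm{EST}(a,\rho,V,u)$ from $p_j$: set $est[\rho][j]\gets est[\rho][j]\cup V$ and $aux[\rho][j]\gets u$; if $a=\mathsf{True}$, send $\mathrm{EST}(\mathsf{False},\rho,est[\rho{-}1][i],aux[r][i])$ to $p_j$. Definitions. - A system state is well-initialized if every correct processor has $(r_i,est_i,aux_i)=\mathit{initState}$ and no channel between two correct processors contains $\mathrm{EST}$ messages. - An execution includes a complete invocation of binary consensus if every correct processor invokes $\mathsf{propose}_i()$ exactly once in it. *)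

theory Defs
  imports Main
begin

(* Processors are indexed by 1..n; binary values {0,1} are represented by bool
   (0 = False, 1 = True); the bottom value of aux is None. Rounds/array indices
   are nat; only indices 0..M+1 are ever modified. *)

datatype pcval = AtLoopHead | InRepeat

record lstate =
  rnd :: nat
  est :: "nat \<Rightarrow> nat \<Rightarrow> bool set"
  aux :: "nat \<Rightarrow> nat \<Rightarrow> bool option"
  pc  :: pcval

datatype msg = EST bool nat "bool set" "bool option"

datatype resval = Val bool | ErrSym | BotRes

datatype label = Propose nat bool | Internal

record sysstate =
  loc  :: "nat \<Rightarrow> lstate"
  chan :: "nat \<Rightarrow> nat \<Rightarrow> msg set"   (* chan j k : packets in transit from p_j to p_k *)

definition isInitState :: "lstate \<Rightarrow> bool" where
  "isInitState s \<longleftrightarrow> rnd s = 0 \<and> est s = (\<lambda>_ _. {}) \<and> aux s = (\<lambda>_ _. None)"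

definition binValues :: "nat \<Rightarrow> lstate \<Rightarrow> nat \<Rightarrow> nat \<Rightarrow> bool set" where
  "binValues n s \<rho> x = {y. x \<le> card {j \<in> {1..n}. y \<in> est s \<rho> j}}"

definition infoSet :: "nat \<Rightarrow> nat \<Rightarrow> lstate \<Rightarrow> nat set \<Rightarrow> bool" where
  "infoSet n t s S \<longleftrightarrow> S \<subseteq> {1..n} \<and> n - t \<le> card S \<and>
     (\<forall>j\<in>S. \<exists>y. aux s (rnd s) j = Some y \<and> y \<in> binValues n s (rnd s) (2*t+1))"

(* infoResult() is nondeterministic (choice of S): relation between state and returned set *)
definition infoResult :: "nat \<Rightarrow> nat \<Rightarrow> lstate \<Rightarrow> bool set \<Rightarrow> bool" where
  "infoResult n t s V \<longleftrightarrow>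
     (\<exists>S. infoSet n t s S \<and> V = {y. \<exists>j\<in>S. aux s (rnd s) j = Some y})
     \<or> ((\<nexists>S. infoSet n t s S) \<and> V = {})"

definition result :: "nat \<Rightarrow> nat \<Rightarrow> nat \<Rightarrow> nat \<Rightarrow> lstate \<Rightarrow> resval" where
  "result n t M i s =
    (if \<exists>v. est s (M+1) i = {v} then Val (THE v. est s (M+1) i = {v})
     else if M \<le> rnd s \<and> (\<exists>V. infoResult n t s V \<and> V \<noteq> {}) then ErrSym
     else BotRes)"

definition setEst :: "nat \<Rightarrow> nat \<Rightarrow> bool set \<Rightarrow> lstate \<Rightarrow> lstate" where
  "setEst r j V s = s\<lparr>est := (est s)(r := (est s r)(j := V))\<rparr>"

definition setAux :: "nat \<Rightarrow> nat \<Rightarrow> bool option \<Rightarrow> lstate \<Rightarrow> lstate" where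
  "setAux r j u s = s\<lparr>aux := (aux s)(r := (aux s r)(j := u))\<rparr>"

definition proposeState :: "nat \<Rightarrow> bool \<Rightarrow> lstate" where
  "proposeState i v = \<lparr>rnd = 0, est = (\<lambda>_ _. {})(0 := (\<lambda>_. {})(i := {v})),
                        aux = (\<lambda>_ _. None), pc = AtLoopHead\<rparr>"

definition decide :: "nat \<Rightarrow> nat \<Rightarrow> bool \<Rightarrow> lstate \<Rightarrow> lstate" where
  "decide M i x s = (let upd = (\<lambda>r'. rnd s \<le> r' \<and> r' \<le> M+1 \<and> (est s r' i = {} \<or> aux s r' i = None)) in
     s\<lparr>est := (\<lambda>r' j. if j = i \<and> upd r' then {x} else est s r' j),
       aux := (\<lambda>r' j. if j = i \<and> upd r' then Some x else aux s r' j)\<rparr>)"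

(* coin r = randomBit(r) *)
definition tryToDecide :: "nat \<Rightarrow> (nat \<Rightarrow> bool) \<Rightarrow> nat \<Rightarrow> bool set \<Rightarrow> lstate \<Rightarrow> lstate" where
  "tryToDecide M coin i V s =
    (if \<not> (\<exists>v. V = {v}) then setEst (rnd s) i {coin (rnd s)} s
     else (let v = (THE v. V = {v}); s1 = setEst (rnd s) i {v} s in
           if v = coin (rnd s) then decide M i v s1 else s1))"

(* lines (1)-(3) of a do-forever iteration, then entering the repeat loop (4) *)
definition loopIter :: "nat \<Rightarrow> nat \<Rightarrow> lstate \<Rightarrow> lstate \<Rightarrow> bool" where
  "loopIter M i s s' \<longleftrightarrow> (\<exists>w xs.
     let e0 = (if est s 0 i = {False, True} then {w} else est s 0 i);
         s1 = setEst 0 i e0 s;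
         needs = (\<lambda>r'. 1 \<le> r' \<and> r' < rnd s1 \<and> (est s1 r' i = {} \<or> aux s1 r' i = None))
     in (\<forall>r'. e0 \<noteq> {} \<longrightarrow> xs r' \<in> e0) \<and>
        s' = s1\<lparr>est := (\<lambda>r' j. if j = i \<and> needs r' then e0 else est s1 r' j),
                aux := (\<lambda>r' j. if j = i \<and> needs r' then Some (xs r') else aux s1 r' j),
                rnd := min (rnd s1 + 1) M, pc := InRepeat\<rparr>)"

(* one iteration of the repeat body (4), followed by the until-test; on exit line (5) *)
definition repIter :: "nat \<Rightarrow> nat \<Rightarrow> nat \<Rightarrow> (nat \<Rightarrow> bool) \<Rightarrow> nat \<Rightarrow> lstate \<Rightarrow> lstate
                        \<Rightarrow> (nat \<times> msg) set \<Rightarrow> bool" where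
  "repIter n t M coin i s s' out \<longleftrightarrow> (\<exists>s1 V.
     (let r = rnd s; B = binValues n s r (2*t+1) in
       (if B \<noteq> {} \<and> (aux s r i = None \<or> (\<exists>y. aux s r i = Some y \<and> y \<notin> B))
        then (\<exists>w\<in>B. s1 = setAux r i (Some w) s) else s1 = s))
     \<and> out = {(k, EST True (rnd s1) (est s1 (rnd s1 - 1) i \<union> binValues n s1 (rnd s1) (t+1))
                        (aux s1 (rnd s1) i)) | k. k \<in> {1..n}}
     \<and> infoResult n t s1 V
     \<and> s' = (if V = {} then s1 else (tryToDecide M coin i V s1)\<lparr>pc := AtLoopHead\<rparr>))"

definition recvUpdate :: "nat \<Rightarrow> nat \<Rightarrow> nat \<Rightarrow> msg \<Rightarrow> lstate \<Rightarrow> lstate \<times> (nat \<times> msg) set" where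
  "recvUpdate M i j m s = (case m of EST a \<rho> V u \<Rightarrow>
     if 1 \<le> \<rho> \<and> \<rho> \<le> M+1 then
       (let s1 = setAux \<rho> j u (setEst \<rho> j (est s \<rho> j \<union> V) s) in
        (s1, if a then {(j, EST False \<rho> (est s1 (\<rho>-1) i) (aux s1 (rnd s1) i))} else {}))
     else (s, {}))"

(* p_i sends the messages in out over bounded-capacity (cap) lossy channels *)
definition sendTo :: "nat \<Rightarrow> nat \<Rightarrow> (nat \<times> msg) set \<Rightarrow> (nat \<Rightarrow> nat \<Rightarrow> msg set)
                      \<Rightarrow> (nat \<Rightarrow> nat \<Rightarrow> msg set) \<Rightarrow> bool" where
  "sendTo cap i out ch ch' \<longleftrightarrow>
    (\<forall>j k. j \<noteq> i \<longrightarrow> ch' j k = ch j k) \<and>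
    (\<forall>k. ch' i k \<subseteq> ch i k \<union> {m. (k, m) \<in> out} \<and> finite (ch' i k) \<and> card (ch' i k) \<le> cap)"

definition sstep :: "nat \<Rightarrow> nat \<Rightarrow> nat \<Rightarrow> nat \<Rightarrow> nat set \<Rightarrow> (nat \<Rightarrow> bool)
                     \<Rightarrow> sysstate \<Rightarrow> label \<Rightarrow> sysstate \<Rightarrow> bool" where
  "sstep n t M cap Correct coin \<sigma> l \<sigma>' \<longleftrightarrow>
   (\<exists>i v. i \<in> Correct \<and> l = Propose i v \<and> \<sigma>' = \<sigma>\<lparr>loc := (loc \<sigma>)(i := proposeState i v)\<rparr>)
 \<or> (l = Internal \<and> (
     (\<exists>i s'. i \<in> Correct \<and> pc (loc \<sigma> i) = AtLoopHead \<and> \<not> isInitState (loc \<sigma> i)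
         \<and> loopIter M i (loc \<sigma> i) s' \<and> \<sigma>' = \<sigma>\<lparr>loc := (loc \<sigma>)(i := s')\<rparr>)
   \<or> (\<exists>i s' out ch'. i \<in> Correct \<and> pc (loc \<sigma> i) = InRepeat \<and> \<not> isInitState (loc \<sigma> i)
         \<and> repIter n t M coin i (loc \<sigma> i) s' out \<and> sendTo cap i out (chan \<sigma>) ch'
         \<and> \<sigma>' = \<sigma>\<lparr>loc := (loc \<sigma>)(i := s'), chan := ch'\<rparr>)
   \<or> (\<exists>i j m ch1 ch'. i \<in> Correct \<and> j \<in> {1..n} \<and> m \<in> chan \<sigma> j i
         \<and> (ch1 = chan \<sigma> \<or> ch1 = (chan \<sigma>)(j := (chan \<sigma> j)(i := chan \<sigma> j i - {m})))
         \<and> sendTo cap i (snd (recvUpdate M i j m (loc \<sigma> i))) ch1 ch'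
         \<and> \<sigma>' = \<sigma>\<lparr>loc := (loc \<sigma>)(i := fst (recvUpdate M i j m (loc \<sigma> i))), chan := ch'\<rparr>)
   \<or> (\<exists>j k m ch'. j \<in> {1..n} - Correct \<and> k \<in> {1..n}
         \<and> ch' \<subseteq> insert m (chan \<sigma> j k) \<and> finite ch' \<and> card ch' \<le> cap
         \<and> \<sigma>' = \<sigma>\<lparr>chan := (chan \<sigma>)(j := (chan \<sigma> j)(k := ch'))\<rparr>)
   \<or> (\<exists>j k ch'. ch' \<subseteq> chan \<sigma> j k \<and> \<sigma>' = \<sigma>\<lparr>chan := (chan \<sigma>)(j := (chan \<sigma> j)(k := ch'))\<rparr>)
   \<or> \<sigma>' = \<sigma>))"

definition execution :: "nat \<Rightarrow> nat \<Rightarrow> nat \<Rightarrow> nat \<Rightarrow> nat set \<Rightarrow> (nat \<Rightarrow> bool)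
                         \<Rightarrow> (nat \<Rightarrow> sysstate) \<Rightarrow> (nat \<Rightarrow> label) \<Rightarrow> bool" where
  "execution n t M cap Correct coin R lab \<longleftrightarrow>
     (\<forall>k. sstep n t M cap Correct coin (R k) (lab k) (R (Suc k)))"

definition wellInitialized :: "nat set \<Rightarrow> sysstate \<Rightarrow> bool" where
  "wellInitialized Correct \<sigma> \<longleftrightarrow>
     (\<forall>i\<in>Correct. isInitState (loc \<sigma> i) \<and> pc (loc \<sigma> i) = AtLoopHead) \<and>
     (\<forall>i\<in>Correct. \<forall>k\<in>Correct. chan \<sigma> i k = {})"

definition completeInvocation :: "nat set \<Rightarrow> (nat \<Rightarrow> label) \<Rightarrow> bool" where
  "completeInvocation Correct lab \<longleftrightarrow> (\<forall>i\<in>Correct. \<exists>!k. \<exists>v. lab k = Propose i v)"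

end

theory Submission
  imports Defs
begin

(* Let P be the set of values proposed by correct processors before c. Invariant: every estimate
   a correct processor stores for a correct processor, and the value set of every EST message in
   transit between correct processors, lies in P. The aux entries need not be tracked: infoResult
   only returns values in binValues(2t+1), and a value held by more than t processors is held by
   a correct one, hence lies in P; when infoResult returns both values, the coin lies in P too.
   Since result() reads est[M+1][i], a decided value lies in P. *)

definition estsWithin :: "nat set \<Rightarrow> bool set \<Rightarrow> lstate \<Rightarrow> bool" where
  "estsWithin Correct P s \<longleftrightarrow> (\<forall>j\<in>Correct. \<forall>r. est s r j \<subseteq> P)"

fun estPayload :: "msg \<Rightarrow> bool set" where
  "estPayload (EST a \<rho> V u) = V"

definition chansWithin :: "nat set \<Rightarrow> bool set \<Rightarrow> (nat \<Rightarrow> nat \<Rightarrow> msg set) \<Rightarrow> bool" where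
  "chansWithin Correct P ch \<longleftrightarrow> (\<forall>j\<in>Correct. \<forall>k\<in>Correct. \<forall>m\<in>ch j k. estPayload m \<subseteq> P)"

definition validityInv :: "nat set \<Rightarrow> bool set \<Rightarrow> sysstate \<Rightarrow> bool" where
  "validityInv Correct P \<sigma> \<longleftrightarrow>
     (\<forall>i\<in>Correct. estsWithin Correct P (loc \<sigma> i)) \<and> chansWithin Correct P (chan \<sigma>)"

lemma estsWithin_setEst:
  assumes "estsWithin Correct P s" "j \<in> Correct \<Longrightarrow> V \<subseteq> P"
  shows "estsWithin Correct P (setEst r j V s)"
  using assms unfolding estsWithin_def setEst_def by auto

lemma est_setAux [simp]: "est (setAux r j u s) = est s"
  unfolding setAux_def by simp

lemma estsWithin_decide:
  assumes "estsWithin Correct P s" "x \<in> P"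
  shows "estsWithin Correct P (decide M i x s)"
  using assms unfolding estsWithin_def decide_def Let_def by auto

lemma binValues_subset_if_more_than_faulty:
  assumes "estsWithin Correct P s" "Correct \<subseteq> {1..n}" "card ({1..n} - Correct) < x"
  shows "binValues n s r x \<subseteq> P"
proof
  fix y assume "y \<in> binValues n s r x"
  then have many: "x \<le> card {j \<in> {1..n}. y \<in> est s r j}" by (simp add: binValues_def)
  show "y \<in> P"
  proof (rule ccontr)
    assume "y \<notin> P"
    then have "{j \<in> {1..n}. y \<in> est s r j} \<subseteq> {1..n} - Correct"
      using assms(1) unfolding estsWithin_def by blast
    then have "card {j \<in> {1..n}. y \<in> est s r j} \<le> card ({1..n} - Correct)"
      by (intro card_mono) auto
    then show False using many assms(3) by linarith
  qed
qed

lemma infoResult_subset_binValues: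
  "infoResult n t s V \<Longrightarrow> V \<subseteq> binValues n s (rnd s) (2*t+1)"
  unfolding infoResult_def infoSet_def by auto

lemma bool_set_cases: "(V :: bool set) = {} \<or> (\<exists>v. V = {v}) \<or> V = UNIV"
proof -
  have "V \<in> Pow {False, True}" using UNIV_bool by auto
  then show ?thesis by (simp add: Pow_insert UNIV_bool) blast
qed

lemma estsWithin_tryToDecide:
  assumes "estsWithin Correct P s" "V \<subseteq> P" "V \<noteq> {}"
  shows "estsWithin Correct P (tryToDecide M coin i V s)"
proof (cases "\<exists>v. V = {v}")
  case False
  then have "coin (rnd s) \<in> P" using bool_set_cases[of V] assms(2,3) by auto
  then show ?thesis using False estsWithin_setEst[OF assms(1)] unfolding tryToDecide_def by simp
next
  case True
  then obtain v where V: "V = {v}" by blast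
  with assms(2) have "v \<in> P" and "estsWithin Correct P (setEst (rnd s) i {v} s)"
    by (auto intro: estsWithin_setEst[OF assms(1)])
  then show ?thesis
    using V estsWithin_decide unfolding tryToDecide_def Let_def by (cases "v = coin (rnd s)") simp_all
qed

lemma loopIter_est:
  assumes "loopIter M i s s'"
  shows "est s' r j = est s r j \<or> (j = i \<and> est s' r j \<subseteq> est s 0 i)"
proof -
  obtain w xs where s': "s' = (let e0 = (if est s 0 i = {False, True} then {w} else est s 0 i);
         s1 = setEst 0 i e0 s;
         needs = (\<lambda>r'. 1 \<le> r' \<and> r' < rnd s1 \<and> (est s1 r' i = {} \<or> aux s1 r' i = None))
     in s1\<lparr>est := (\<lambda>r' j. if j = i \<and> needs r' then e0 else est s1 r' j),
                aux := (\<lambda>r' j. if j = i \<and> needs r' then Some (xs r') else aux s1 r' j),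
                rnd := min (rnd s1 + 1) M, pc := InRepeat\<rparr>)"
    using assms unfolding loopIter_def Let_def by blast
  show ?thesis unfolding s' Let_def setEst_def by auto
qed

lemma estsWithin_loopIter:
  assumes "estsWithin Correct P s" "i \<in> Correct" "loopIter M i s s'"
  shows "estsWithin Correct P s'"
  using assms loopIter_est[OF assms(3)] unfolding estsWithin_def by blast

lemma repIter_cases:
  assumes "repIter n t M coin i s s' out"
  obtains s1 V where "est s1 = est s" "infoResult n t s1 V"
    and "out = {(k, EST True (rnd s1) (est s1 (rnd s1 - 1) i \<union> binValues n s1 (rnd s1) (t+1))
                        (aux s1 (rnd s1) i)) | k. k \<in> {1..n}}"
    and "s' = (if V = {} then s1 else (tryToDecide M coin i V s1)\<lparr>pc := AtLoopHead\<rparr>)"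
proof -
  from assms obtain s1 V where choice: "let r = rnd s; B = binValues n s r (2*t+1) in
       (if B \<noteq> {} \<and> (aux s r i = None \<or> (\<exists>y. aux s r i = Some y \<and> y \<notin> B))
        then (\<exists>w\<in>B. s1 = setAux r i (Some w) s) else s1 = s)"
    and "out = {(k, EST True (rnd s1) (est s1 (rnd s1 - 1) i \<union> binValues n s1 (rnd s1) (t+1))
                        (aux s1 (rnd s1) i)) | k. k \<in> {1..n}}"
    and "infoResult n t s1 V"
    and "s' = (if V = {} then s1 else (tryToDecide M coin i V s1)\<lparr>pc := AtLoopHead\<rparr>)"
    unfolding repIter_def by (elim exE conjE) (rule that)
  moreover from choice have "est s1 = est s" by (auto simp: Let_def split: if_splits)
  ultimately show thesis using that by blast
qed

lemma estsWithin_repIter: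
  assumes "estsWithin Correct P s" "i \<in> Correct"
    and "Correct \<subseteq> {1..n}" "card ({1..n} - Correct) \<le> t"
    and "repIter n t M coin i s s' out"
  shows "estsWithin Correct P s'" and "\<forall>(k, m)\<in>out. estPayload m \<subseteq> P"
proof -
  obtain s1 V where est1: "est s1 = est s" and info: "infoResult n t s1 V"
    and out: "out = {(k, EST True (rnd s1) (est s1 (rnd s1 - 1) i \<union> binValues n s1 (rnd s1) (t+1))
                        (aux s1 (rnd s1) i)) | k. k \<in> {1..n}}"
    and s': "s' = (if V = {} then s1 else (tryToDecide M coin i V s1)\<lparr>pc := AtLoopHead\<rparr>)"
    using repIter_cases[OF assms(5)] .
  have inv1: "estsWithin Correct P s1" using assms(1) est1 unfolding estsWithin_def by simp
  have bin: "binValues n s1 r x \<subseteq> P" if "t < x" for r x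
    using binValues_subset_if_more_than_faulty[OF inv1 assms(3)] assms(4) that by simp
  have "V \<subseteq> P" using infoResult_subset_binValues[OF info] bin[of "2*t+1"] by auto
  then show "estsWithin Correct P s'"
    using s' inv1 estsWithin_tryToDecide[OF inv1] by (simp add: estsWithin_def)
  show "\<forall>(k, m)\<in>out. estPayload m \<subseteq> P"
    using inv1 assms(2) bin[of "t+1"] unfolding out estsWithin_def by auto
qed

lemma estsWithin_recvUpdate:
  assumes "estsWithin Correct P s" "i \<in> Correct" "j \<in> Correct \<longrightarrow> estPayload m \<subseteq> P"
  shows "estsWithin Correct P (fst (recvUpdate M i j m s))"
    and "\<forall>(k, m')\<in>snd (recvUpdate M i j m s). estPayload m' \<subseteq> P"
proof -
  obtain a \<rho> V u where m: "m = EST a \<rho> V u" by (cases m)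
  let ?s1 = "setAux \<rho> j u (setEst \<rho> j (est s \<rho> j \<union> V) s)"
  have "estsWithin Correct P ?s1"
    using assms estsWithin_setEst[OF assms(1)] unfolding m estsWithin_def by simp
  then show "estsWithin Correct P (fst (recvUpdate M i j m s))"
    and "\<forall>(k, m')\<in>snd (recvUpdate M i j m s). estPayload m' \<subseteq> P"
    using assms(1,2) unfolding recvUpdate_def m Let_def estsWithin_def by auto
qed

lemma chansWithin_sendTo:
  assumes "chansWithin Correct P ch" "\<forall>(k, m)\<in>out. estPayload m \<subseteq> P"
    and "sendTo cap i out ch ch'"
  shows "chansWithin Correct P ch'"
  using assms unfolding chansWithin_def sendTo_def
  by (metis (no_types, lifting) UnE case_prodD mem_Collect_eq subsetD)

lemma chansWithin_subset:
  assumes "chansWithin Correct P ch"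
    and "\<And>j k. j \<in> Correct \<Longrightarrow> k \<in> Correct \<Longrightarrow> ch' j k \<subseteq> ch j k"
  shows "chansWithin Correct P ch'"
  using assms unfolding chansWithin_def by blast

lemma validityInv_shrink_chan:
  assumes "validityInv Correct P \<sigma>"
    and "\<And>j k. j \<in> Correct \<Longrightarrow> k \<in> Correct \<Longrightarrow> ch' j k \<subseteq> chan \<sigma> j k"
  shows "validityInv Correct P (\<sigma>\<lparr>chan := ch'\<rparr>)"
  using assms chansWithin_subset[of Correct P "chan \<sigma>" ch'] unfolding validityInv_def by simp

lemma validityInv_update:
  assumes "validityInv Correct P \<sigma>" "estsWithin Correct P s'" "chansWithin Correct P ch'"
  shows "validityInv Correct P (\<sigma>\<lparr>loc := (loc \<sigma>)(i := s'), chan := ch'\<rparr>)"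
  using assms unfolding validityInv_def by simp

lemma validityInv_update_loc:
  assumes "validityInv Correct P \<sigma>" "estsWithin Correct P s'"
  shows "validityInv Correct P (\<sigma>\<lparr>loc := (loc \<sigma>)(i := s')\<rparr>)"
  using assms unfolding validityInv_def by simp

lemma validityInv_repIter:
  assumes inv: "validityInv Correct P \<sigma>" and i: "i \<in> Correct"
    and faulty: "Correct \<subseteq> {1..n}" "card ({1..n} - Correct) \<le> t"
    and rep: "repIter n t M coin i (loc \<sigma> i) s' out" and send: "sendTo cap i out (chan \<sigma>) ch'"
  shows "validityInv Correct P (\<sigma>\<lparr>loc := (loc \<sigma>)(i := s'), chan := ch'\<rparr>)"
proof -
  have "estsWithin Correct P (loc \<sigma> i)" and chans: "chansWithin Correct P (chan \<sigma>)"
    using inv i unfolding validityInv_def by auto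
  note after = estsWithin_repIter[OF this(1) i faulty rep]
  have "chansWithin Correct P ch'" by (rule chansWithin_sendTo[OF chans after(2) send])
  then show ?thesis by (rule validityInv_update[OF inv after(1)])
qed

lemma validityInv_receive:
  assumes inv: "validityInv Correct P \<sigma>" and "i \<in> Correct" "m \<in> chan \<sigma> j i"
    and shrink: "\<And>j k. ch1 j k \<subseteq> chan \<sigma> j k"
    and send: "sendTo cap i (snd (recvUpdate M i j m (loc \<sigma> i))) ch1 ch'"
  shows "validityInv Correct P
           (\<sigma>\<lparr>loc := (loc \<sigma>)(i := fst (recvUpdate M i j m (loc \<sigma> i))), chan := ch'\<rparr>)"
proof -
  have ests: "estsWithin Correct P (loc \<sigma> i)" and chans: "chansWithin Correct P (chan \<sigma>)"
    using inv \<open>i \<in> Correct\<close> unfolding validityInv_def by auto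
  have "j \<in> Correct \<longrightarrow> estPayload m \<subseteq> P"
    using chans assms(2,3) unfolding chansWithin_def by (meson subsetD)
  note recv = estsWithin_recvUpdate[OF ests \<open>i \<in> Correct\<close> this]
  have "chansWithin Correct P ch1" using chansWithin_subset[OF chans shrink] .
  then have "chansWithin Correct P ch'" by (rule chansWithin_sendTo[OF _ recv(2) send])
  then show ?thesis by (rule validityInv_update[OF inv recv(1)])
qed

lemma validityInv_sstep:
  assumes inv: "validityInv Correct P \<sigma>"
    and faulty: "Correct \<subseteq> {1..n}" "card ({1..n} - Correct) \<le> t"
    and step: "sstep n t M cap Correct coin \<sigma> l \<sigma>'"
    and proposed: "\<And>j v. j \<in> Correct \<Longrightarrow> l = Propose j v \<Longrightarrow> v \<in> P"
  shows "validityInv Correct P \<sigma>'"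
  using step unfolding sstep_def
proof (elim disjE exE conjE)
  fix i v assume "i \<in> Correct" "l = Propose i v" "\<sigma>' = \<sigma>\<lparr>loc := (loc \<sigma>)(i := proposeState i v)\<rparr>"
  moreover from calculation(1,2) have "estsWithin Correct P (proposeState i v)"
    using proposed unfolding estsWithin_def proposeState_def by auto
  ultimately show ?thesis using validityInv_update_loc[OF inv] by simp
next
  fix i s' assume "i \<in> Correct" "loopIter M i (loc \<sigma> i) s'" "\<sigma>' = \<sigma>\<lparr>loc := (loc \<sigma>)(i := s')\<rparr>"
  moreover from calculation(1,2) have "estsWithin Correct P s'"
    using inv estsWithin_loopIter unfolding validityInv_def by blast
  ultimately show ?thesis using validityInv_update_loc[OF inv] by simp
next
  fix i s' out ch' assume "i \<in> Correct" "repIter n t M coin i (loc \<sigma> i) s' out"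
    "sendTo cap i out (chan \<sigma>) ch'" "\<sigma>' = \<sigma>\<lparr>loc := (loc \<sigma>)(i := s'), chan := ch'\<rparr>"
  then show ?thesis using validityInv_repIter[OF inv _ faulty] by simp
next
  fix i j m ch1 ch' assume "i \<in> Correct" "m \<in> chan \<sigma> j i" "ch1 = chan \<sigma>"
    and send: "sendTo cap i (snd (recvUpdate M i j m (loc \<sigma> i))) ch1 ch'"
    and "\<sigma>' = \<sigma>\<lparr>loc := (loc \<sigma>)(i := fst (recvUpdate M i j m (loc \<sigma> i))), chan := ch'\<rparr>"
  then show ?thesis using validityInv_receive[OF inv _ _ _ send] by simp
next
  fix i j m ch1 ch' assume "i \<in> Correct" "m \<in> chan \<sigma> j i"
    and ch1: "ch1 = (chan \<sigma>)(j := (chan \<sigma> j)(i := chan \<sigma> j i - {m}))"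
    and send: "sendTo cap i (snd (recvUpdate M i j m (loc \<sigma> i))) ch1 ch'"
    and "\<sigma>' = \<sigma>\<lparr>loc := (loc \<sigma>)(i := fst (recvUpdate M i j m (loc \<sigma> i))), chan := ch'\<rparr>"
  moreover have "ch1 a b \<subseteq> chan \<sigma> a b" for a b by (auto simp: ch1)
  ultimately show ?thesis using validityInv_receive[OF inv _ _ _ send] by simp
next
  fix j k m ch' assume "j \<in> {1..n} - Correct"
    and \<sigma>': "\<sigma>' = \<sigma>\<lparr>chan := (chan \<sigma>)(j := (chan \<sigma> j)(k := ch'))\<rparr>"
  show ?thesis unfolding \<sigma>' by (rule validityInv_shrink_chan[OF inv]) (use \<open>j \<in> _\<close> in auto)
next
  fix j k ch' assume "ch' \<subseteq> chan \<sigma> j k"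
    and \<sigma>': "\<sigma>' = \<sigma>\<lparr>chan := (chan \<sigma>)(j := (chan \<sigma> j)(k := ch'))\<rparr>"
  show ?thesis unfolding \<sigma>' by (rule validityInv_shrink_chan[OF inv]) (use \<open>ch' \<subseteq> _\<close> in auto)
qed (use inv in simp)

lemma result_Val_est: "result n t M i s = Val v \<Longrightarrow> est s (M+1) i = {v}"
  unfolding result_def by (auto split: if_splits)

theorem lemma7:
  fixes n t M cap :: nat and Correct :: "nat set" and coin :: "nat \<Rightarrow> bool"
    and R :: "nat \<Rightarrow> sysstate" and lab :: "nat \<Rightarrow> label"
    and i c :: nat and v :: bool
  assumes "n \<ge> 3 * t + 1"
    and "Correct \<subseteq> {1..n}"
    and "card ({1..n} - Correct) \<le> t"
    and "M \<ge> 1"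
    and "execution n t M cap Correct coin R lab"
    and "wellInitialized Correct (R 0)"
    and "completeInvocation Correct lab"
    and "i \<in> Correct"
    and "result n t M i (loc (R c) i) = Val v"
  shows "\<exists>j\<in>Correct. \<exists>k<c. lab k = Propose j v"
proof -
  define P where "P = {v. \<exists>j\<in>Correct. \<exists>k<c. lab k = Propose j v}"
  have "validityInv Correct P (R k)" if "k \<le> c" for k
    using that
  proof (induction k)
    case 0
    show ?case using assms(6) unfolding validityInv_def wellInitialized_def isInitState_def
        estsWithin_def chansWithin_def by auto
  next
    case (Suc k)
    then have "validityInv Correct P (R k)" by simp
    moreover have "sstep n t M cap Correct coin (R k) (lab k) (R (Suc k))"
      using assms(5) unfolding execution_def by blast
    moreover have "v' \<in> P" if "j \<in> Correct" "lab k = Propose j v'" for j v'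
      using that Suc.prems unfolding P_def Suc_le_eq by blast
    ultimately show ?case using validityInv_sstep[OF _ assms(2,3)] by blast
  qed
  then have "estsWithin Correct P (loc (R c) i)" using assms(8) unfolding validityInv_def by blast
  then have "v \<in> P" using result_Val_est[OF assms(9)] assms(8) unfolding estsWithin_def by blast
  then show ?thesis unfolding P_def by blast
qed

end
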